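(* Let $A,N_1,\dots,N_m\in\mathbb R^{n\times n}$ with $\sigma(A)\subset\mathbb C_-$, and for $x_0\in\mathbb R^n$ and $u=(u_1,\dots,u_m)^T\in L^2$ let $x(t,x_0,0)$, $t\ge0$, denote the solution to $\dot x(t)=Ax(t)+\sum_{k=1}^m N_kx(t)u_k(t)$, $x(0)=x_0$. Then there exist $\gamma,k_1,k_2>0$ such that $$\|x(t,x_0,0)\|_2^2\le\exp\{\gamma^2\|u^0\|_{L^2}^2\}\,\|x_0\|_2^2\,k_1e^{-k_2t}\qquad\text{for all }t\ge0$$ for all $u\in L^2$ (and all $x_0$).
   Context: $\mathbb C_-=\{z\in\mathbb C:\Re z<0\}$ and $\sigma(\cdot)$ denotes the spectrum. $L^2$ is the set of $u:[0,\infty)\to\mathbb R^m$ with $\|u\|_{L^2}^2=\int_0^\infty u^T(s)u(s)\,ds<\infty$. The vector $u^0=(u^0_1,\dots,u^0_m)^T$ is defined by $u^0_k\equiv 0$ if $N_k=0$ and $u^0_k=u_k$ otherwise. *)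

theory Defs
  imports "HOL-Analysis.Analysis"
begin

definition cmat :: "real^'n^'n \<Rightarrow> complex^'n^'n" where
  "cmat A = (\<chi> i j. complex_of_real (A $ i $ j))"

definition mspectrum :: "real^'n^'n \<Rightarrow> complex set" where
  "mspectrum A = {l. \<exists>v::complex^'n. v \<noteq> 0 \<and> cmat A *v v = l *s v}"

definition L2 :: "(real \<Rightarrow> real^'m) \<Rightarrow> bool" where
  "L2 u \<longleftrightarrow> u \<in> borel_measurable (lebesgue_on {0..}) \<and>
            integrable (lebesgue_on {0..}) (\<lambda>s. (norm (u s))\<^sup>2)"

definition L2norm_sq :: "(real \<Rightarrow> real^'m) \<Rightarrow> real" where
  "L2norm_sq u = integral\<^sup>L (lebesgue_on {0..}) (\<lambda>s. (norm (u s))\<^sup>2)"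

definition u0 :: "('m \<Rightarrow> real^'n^'n) \<Rightarrow> (real \<Rightarrow> real^'m) \<Rightarrow> real \<Rightarrow> real^'m" where
  "u0 N u = (\<lambda>s. \<chi> k. if N k = 0 then 0 else u s $ k)"

text \<open>x is the (Caratheodory) solution on [0,oo) of x' = A x + sum_k N_k x u_k, x(0) = x0,
  written in integral form.\<close>
definition bilin_solution ::
  "real^'n^'n \<Rightarrow> ('m::finite \<Rightarrow> real^'n^'n) \<Rightarrow> (real \<Rightarrow> real^'m) \<Rightarrow> real^'n \<Rightarrow> (real \<Rightarrow> real^'n) \<Rightarrow> bool" where
  "bilin_solution A N u x0 x \<longleftrightarrow> x 0 = x0 \<and>
     (\<forall>t\<ge>0. ((\<lambda>s. A *v x s + (\<Sum>k\<in>UNIV. (u s $ k) *\<^sub>R (N k *v x s))) has_integral (x t - x0)) {0..t})"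

end

(* Triangularise the complexification of A (Schur) and rescale the triangular basis by powers
   of a small \<epsilon>: the off-diagonal entries become O(\<epsilon>), so in these coordinates, given by an
   injective real-linear map L, A is dissipative: <L v, L (A v)> \<le> -c |L v|^2.  Along a
   solution, y = L x satisfies <y, y'> \<le> f |y|^2 with f = -c + \<beta> |u^0|, hence
   |y t|^2 \<le> |y 0|^2 exp (2 \<integral>f), and 2 \<beta> |u^0| \<le> c + \<beta>^2 |u^0|^2 / c bounds the exponent by
   -ct + (\<beta>^2 / c) |u^0|_{L^2}^2.
   Solutions are only given in integral form, so the differential inequality is integrated by
   hand: if also |y'| \<le> k |y|, then on an interval with \<integral>k \<le> \<delta> the squared norm grows at most
   by the factor exp (2 \<integral>f + 24 \<delta> \<integral>k); these local bounds are chained along a partition of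
   [0, t], and \<delta> \<rightarrow> 0. *)

theory Submission
  imports Defs "Jordan_Normal_Form.Schur_Decomposition"
begin

no_notation vec_index (infixl \<open>$\<close> 100)

section \<open>Schur triangularization over a finite index type\<close>

lemma schur_decomposition_diag_eigenvalue:
  fixes A :: "complex mat"
  assumes A: "A \<in> carrier_mat n n" and char_poly: "char_poly A = (\<Prod>e\<leftarrow>es. [:- e, 1:])"
    and schur: "schur_decomposition A es = (B, P, Q)" and i: "i < n"
  shows "eigenvalue A (B $$ (i, i))"
proof -
  from schur_decomposition[OF A char_poly schur]
  have sim: "similar_mat_wit A B P Q" and diag: "diag_mat B = es"
    by auto
  have "B $$ (i, i) \<in> set es"
    using similar_mat_witD2(5)[OF A sim] i by (auto simp: diag_mat_def simp flip: diag)
  then have "poly (char_poly A) (B $$ (i, i)) = 0"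
    unfolding char_poly poly_prod_list prod_list_zero_iff by (auto simp: o_def)
  then show ?thesis
    using eigenvalue_root_char_poly[OF A] by simp
qed

lemma similar_mat_wit_intertwines:
  assumes A: "A \<in> carrier_mat n n" and sim: "similar_mat_wit A B P Q"
  shows "Q * A = B * Q"
proof -
  note carrier = similar_mat_witD2(5-7)[OF A sim]
  have "Q * A = (Q * P) * (B * Q)"
    using carrier by (simp add: similar_mat_witD2(3)[OF A sim] assoc_mult_mat[of _ n n _ n _ n])
  also have "\<dots> = B * Q"
    using carrier by (simp add: similar_mat_witD2(2)[OF A sim])
  finally show ?thesis .
qed

locale enumerated_type =
  fixes idx :: "'n::finite \<Rightarrow> nat"
  assumes bij_idx: "bij_betw idx UNIV {..<CARD('n)}"
begin

definition unidx :: "nat \<Rightarrow> 'n" where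
  "unidx = inv_into UNIV idx"

lemma idx_less [simp]: "idx i < CARD('n)"
  using bij_idx by (auto simp: bij_betw_def)

lemma unidx_idx [simp]: "unidx (idx i) = i"
  using bij_idx by (simp add: unidx_def bij_betw_def)

lemma idx_unidx [simp]: "k < CARD('n) \<Longrightarrow> idx (unidx k) = k"
  using bij_idx by (simp add: unidx_def bij_betw_def f_inv_into_f)

lemma sum_idx: "(\<Sum>i\<in>UNIV. g (idx i)) = (\<Sum>k<CARD('n). g k)"
  using sum.reindex_bij_betw[OF bij_idx] .

definition to_mat :: "'a^'n^'n \<Rightarrow> 'a mat" where
  "to_mat C = mat CARD('n) CARD('n) (\<lambda>(k, l). C $ unidx k $ unidx l)"

definition from_mat :: "'a mat \<Rightarrow> 'a^'n^'n" where
  "from_mat M = (\<chi> i j. M $$ (idx i, idx j))"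

definition from_vec :: "'a vec \<Rightarrow> 'a^'n" where
  "from_vec v = (\<chi> i. vec_index v (idx i))"

lemma to_mat_carrier: "to_mat C \<in> carrier_mat CARD('n) CARD('n)"
  by (simp add: to_mat_def)

lemma from_to_mat [simp]: "from_mat (to_mat C) = C"
  by (simp add: from_mat_def to_mat_def Finite_Cartesian_Product.vec_eq_iff)

lemma from_mat_one: "from_mat (1\<^sub>m CARD('n)) = Finite_Cartesian_Product.mat 1"
  by (simp add: from_mat_def Finite_Cartesian_Product.vec_eq_iff Finite_Cartesian_Product.mat_def
      inj_eq[OF bij_betw_imp_inj_on[OF bij_idx]])

lemma from_mat_mult:
  assumes "X \<in> carrier_mat CARD('n) CARD('n)" "Y \<in> carrier_mat CARD('n) CARD('n)"
  shows "from_mat (X * Y) = from_mat X ** from_mat Y"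
  using assms sum_idx[of "\<lambda>k. X $$ (idx _, k) * Y $$ (k, idx _)"]
  by (simp add: from_mat_def Finite_Cartesian_Product.vec_eq_iff matrix_matrix_mult_def
      scalar_prod_def atLeast0LessThan)

lemma from_vec_mult_mat_vec:
  assumes "X \<in> carrier_mat CARD('n) CARD('n)" "v \<in> carrier_vec CARD('n)"
  shows "from_vec (X *\<^sub>v v) = from_mat X *v from_vec v"
  using assms sum_idx[of "\<lambda>k. X $$ (idx _, k) * vec_index v k"]
  by (simp add: from_vec_def from_mat_def Finite_Cartesian_Product.vec_eq_iff
      matrix_vector_mult_def scalar_prod_def atLeast0LessThan)

lemma from_vec_smult:
  assumes "v \<in> carrier_vec CARD('n)"
  shows "from_vec (e \<cdot>\<^sub>v v) = e *s from_vec v"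
  using assms by (simp add: from_vec_def Finite_Cartesian_Product.vec_eq_iff)

lemma from_vec_eq_0_iff:
  assumes "v \<in> carrier_vec CARD('n)"
  shows "from_vec v = 0 \<longleftrightarrow> v = 0\<^sub>v CARD('n)"
proof
  assume "from_vec v = 0"
  then have "vec_index v (idx (unidx k)) = 0" for k
    unfolding from_vec_def Finite_Cartesian_Product.vec_eq_iff by simp
  then have "vec_index v k = 0" if "k < CARD('n)" for k
    using idx_unidx[OF that] by metis
  then show "v = 0\<^sub>v CARD('n)"
    using assms by (intro eq_vecI) auto
qed (simp add: from_vec_def Finite_Cartesian_Product.vec_eq_iff)

lemma from_vec_eigenvector:
  assumes "eigenvector (to_mat C) v e"
  shows "from_vec v \<noteq> 0" "C *v from_vec v = e *s from_vec v"
proof -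
  have v: "v \<in> carrier_vec CARD('n)" "v \<noteq> 0\<^sub>v CARD('n)" "to_mat C *\<^sub>v v = e \<cdot>\<^sub>v v"
    using assms carrier_matD[OF to_mat_carrier[of C]] unfolding eigenvector_def by auto
  then show "from_vec v \<noteq> 0"
    by (simp add: from_vec_eq_0_iff)
  show "C *v from_vec v = e *s from_vec v"
    using from_vec_mult_mat_vec[OF to_mat_carrier[of C] v(1)] from_vec_smult[OF v(1)] v(3) by simp
qed

lemma triangularization:
  fixes C :: "complex^'n^'n"
  obtains Q B :: "complex^'n^'n"
  where "invertible Q" "Q ** C = B ** Q" "\<And>i j. idx j < idx i \<Longrightarrow> B $ i $ j = 0"
    "\<And>i. \<exists>v. v \<noteq> 0 \<and> C *v v = B $ i $ i *s v"
proof -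
  let ?n = "CARD('n)"
  have C: "to_mat C \<in> carrier_mat ?n ?n"
    by (rule to_mat_carrier)
  obtain es where char_poly: "char_poly (to_mat C) = (\<Prod>e\<leftarrow>es. [:- e, 1:])"
    using char_poly_factorized[OF C] by blast
  obtain B P Q where schur: "schur_decomposition (to_mat C) es = (B, P, Q)"
    by (metis prod_cases3)
  from schur_decomposition[OF C char_poly schur]
  have sim: "similar_mat_wit (to_mat C) B P Q" and "upper_triangular B"
    by auto
  note carrier = similar_mat_witD2(5-7)[OF C sim]
  show ?thesis
  proof
    show "invertible (from_mat Q)"
      unfolding invertible_def
      by (metis similar_mat_witD2(1,2)[OF C sim] carrier(2,3) from_mat_mult from_mat_one)
    show "from_mat Q ** C = from_mat B ** from_mat Q"
      by (metis similar_mat_wit_intertwines[OF C sim] C carrier(1,3) from_mat_mult from_to_mat)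
    show "from_mat B $ i $ j = 0" if "idx j < idx i" for i j
      using \<open>upper_triangular B\<close> carrier(1) that
      by (simp add: from_mat_def upper_triangular_def)
    show "\<exists>v. v \<noteq> 0 \<and> C *v v = from_mat B $ i $ i *s v" for i
    proof -
      have "eigenvalue (to_mat C) (B $$ (idx i, idx i))"
        by (rule schur_decomposition_diag_eigenvalue[OF C char_poly schur idx_less])
      then obtain v where "eigenvector (to_mat C) v (B $$ (idx i, idx i))"
        unfolding eigenvalue_def by blast
      from from_vec_eigenvector[OF this] show ?thesis
        by (auto simp: from_mat_def)
    qed
  qed
qed

end

lemma complex_matrix_triangularization:
  fixes C :: "complex^'n^'n"
  obtains ord :: "'n \<Rightarrow> nat" and Q B :: "complex^'n^'n"
  where "inj ord" "invertible Q" "Q ** C = B ** Q" "\<And>i j. ord j < ord i \<Longrightarrow> B $ i $ j = 0"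
    "\<And>i. \<exists>v. v \<noteq> 0 \<and> C *v v = B $ i $ i *s v"
proof -
  obtain ord :: "'n \<Rightarrow> nat" where ord: "bij_betw ord UNIV {..<CARD('n)}"
    using ex_bij_betw_finite_nat[of "UNIV :: 'n set"] by (auto simp: lessThan_atLeast0)
  interpret enumerated_type ord
    by unfold_locales (rule ord)
  obtain Q B :: "complex^'n^'n"
    where "invertible Q" "Q ** C = B ** Q" "\<And>i j. ord j < ord i \<Longrightarrow> B $ i $ j = 0"
      "\<And>i. \<exists>v. v \<noteq> 0 \<and> C *v v = B $ i $ i *s v"
    using triangularization[of C] by metis
  with bij_betw_imp_inj_on[OF ord] show ?thesis
    by (rule that)
qed

hide_const (open) Matrix.mat

section \<open>A Lyapunov embedding for stable matrices\<close>

lemma inner_mult_self_complex: "inner a (b * a) = Re b * (cmod a)\<^sup>2" for a b :: complex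
  unfolding cmod_power2 by (simp add: inner_complex_def power2_eq_square algebra_simps)

lemma norm_vec_power2: "(norm x)\<^sup>2 = (\<Sum>i\<in>UNIV. (norm (x $ i))\<^sup>2)"
  by (simp add: norm_vec_def L2_set_def sum_nonneg)

lemma inner_matrix_vector_le:
  fixes S :: "complex^'n^'n"
  assumes diag: "\<And>i. Re (S $ i $ i) \<le> - \<rho>"
    and offdiag: "\<And>i j. i \<noteq> j \<Longrightarrow> cmod (S $ i $ j) \<le> \<kappa>" and "0 \<le> \<kappa>"
  shows "inner z (S *v z) \<le> (\<kappa> * CARD('n) - \<rho>) * (norm z)\<^sup>2"
proof -
  let ?a = "\<lambda>i. cmod (z $ i)"
  have entry: "inner (z $ i) (S $ i $ j * z $ j)
      \<le> (if j = i then Re (S $ i $ i) * (?a i)\<^sup>2 else 0) + \<kappa> * (?a i * ?a j)" for i j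
  proof (cases "j = i")
    case True
    then show ?thesis
      using \<open>0 \<le> \<kappa>\<close> by (simp add: inner_mult_self_complex)
  next
    case False
    have "inner (z $ i) (S $ i $ j * z $ j) \<le> ?a i * (cmod (S $ i $ j) * ?a j)"
      using norm_cauchy_schwarz[of "z $ i" "S $ i $ j * z $ j"] by (simp add: norm_mult)
    also have "\<dots> \<le> ?a i * (\<kappa> * ?a j)"
      using offdiag[of i j] False by (intro mult_left_mono mult_right_mono) auto
    finally show ?thesis
      using False by (simp add: algebra_simps)
  qed
  have "inner z (S *v z) = (\<Sum>i\<in>UNIV. \<Sum>j\<in>UNIV. inner (z $ i) (S $ i $ j * z $ j))"
    by (simp add: inner_vec_def matrix_vector_mult_def inner_sum_right)
  also have "\<dots> \<le> (\<Sum>i\<in>UNIV. Re (S $ i $ i) * (?a i)\<^sup>2 + \<kappa> * (\<Sum>j\<in>UNIV. ?a i * ?a j))"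
    by (intro sum_mono order_trans[OF sum_mono[OF entry]]) (simp add: sum.distrib sum_distrib_left)
  also have "\<dots> = (\<Sum>i\<in>UNIV. Re (S $ i $ i) * (?a i)\<^sup>2) + \<kappa> * (\<Sum>i\<in>UNIV. ?a i)\<^sup>2"
    by (simp add: sum.distrib power2_eq_square sum_product flip: sum_distrib_left)
  also have "\<dots> \<le> - \<rho> * (norm z)\<^sup>2 + \<kappa> * (CARD('n) * (norm z)\<^sup>2)"
  proof (rule add_mono)
    show "(\<Sum>i\<in>UNIV. Re (S $ i $ i) * (?a i)\<^sup>2) \<le> - \<rho> * (norm z)\<^sup>2"
      unfolding norm_vec_power2 sum_distrib_left by (intro sum_mono mult_right_mono) (auto simp: diag)
    show "\<kappa> * (\<Sum>i\<in>UNIV. ?a i)\<^sup>2 \<le> \<kappa> * (CARD('n) * (norm z)\<^sup>2)"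
      using sum_squared_le_sum_of_squares[of ?a UNIV] \<open>0 \<le> \<kappa>\<close>
      by (intro mult_left_mono) (auto simp: norm_vec_power2 mult.commute)
  qed
  finally show ?thesis
    by (simp add: algebra_simps)
qed

lemma scaled_upper_triangular_entry_le:
  fixes B :: "complex^'n^'n" and ord :: "'n \<Rightarrow> nat"
  assumes ord: "inj ord" and upper: "\<And>i j. ord j < ord i \<Longrightarrow> B $ i $ j = 0"
    and \<epsilon>: "0 < \<epsilon>" "\<epsilon> \<le> 1" and "i \<noteq> j"
  shows "cmod (of_real (\<epsilon> ^ ord j / \<epsilon> ^ ord i) * B $ i $ j) \<le> \<epsilon> * cmod (B $ i $ j)"
proof (cases "ord j < ord i")
  case True
  then show ?thesis
    using upper by simp
next
  case False
  with ord \<open>i \<noteq> j\<close> have ij: "ord i < ord j"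
    by (metis injD linorder_neqE_nat)
  have "\<epsilon> ^ ord j / \<epsilon> ^ ord i = \<epsilon> ^ (ord j - ord i)"
    using \<epsilon> ij by (simp add: power_diff)
  also have "\<dots> \<le> \<epsilon> ^ 1"
    using \<epsilon> ij by (intro power_decreasing) auto
  finally have ratio: "\<epsilon> ^ ord j / \<epsilon> ^ ord i \<le> \<epsilon>"
    by simp
  have "cmod (of_real (\<epsilon> ^ ord j / \<epsilon> ^ ord i) * B $ i $ j) = \<epsilon> ^ ord j / \<epsilon> ^ ord i * cmod (B $ i $ j)"
    using \<epsilon> by (simp add: norm_mult norm_divide norm_power)
  also have "\<dots> \<le> \<epsilon> * cmod (B $ i $ j)"
    by (rule mult_right_mono[OF ratio norm_ge_zero])
  finally show ?thesis .
qed

lemma inner_scaled_triangular_le: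
  fixes B :: "complex^'n^'n" and ord :: "'n \<Rightarrow> nat"
  assumes ord: "inj ord" and upper: "\<And>i j. ord j < ord i \<Longrightarrow> B $ i $ j = 0"
    and diag: "\<And>i. Re (B $ i $ i) \<le> - \<rho>" and K: "\<And>i j. cmod (B $ i $ j) \<le> K"
    and \<epsilon>: "0 < \<epsilon>" "\<epsilon> \<le> 1"
  shows "inner z ((\<chi> i j. of_real (\<epsilon> ^ ord j / \<epsilon> ^ ord i) * B $ i $ j) *v z)
    \<le> (K * \<epsilon> * CARD('n) - \<rho>) * (norm z)\<^sup>2"
proof (rule inner_matrix_vector_le)
  show "Re ((\<chi> i j. of_real (\<epsilon> ^ ord j / \<epsilon> ^ ord i) * B $ i $ j) $ i $ i) \<le> - \<rho>" for i
    using \<epsilon> diag by simp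
  show "cmod ((\<chi> i j. of_real (\<epsilon> ^ ord j / \<epsilon> ^ ord i) * B $ i $ j) $ i $ j) \<le> K * \<epsilon>"
    if "i \<noteq> j" for i j
  proof -
    have "cmod ((\<chi> i j. of_real (\<epsilon> ^ ord j / \<epsilon> ^ ord i) * B $ i $ j) $ i $ j) \<le> \<epsilon> * cmod (B $ i $ j)"
      using scaled_upper_triangular_entry_le[OF ord upper \<epsilon> that] by simp
    also have "\<dots> \<le> K * \<epsilon>"
      using mult_left_mono[OF K[of i j], of \<epsilon>] \<epsilon> by (simp add: mult.commute)
    finally show ?thesis .
  qed
  show "0 \<le> K * \<epsilon>"
    using order_trans[OF norm_ge_zero K] \<epsilon> by simp
qed

lemma scaled_triangular_dissipative:
  fixes B :: "complex^'n^'n" and ord :: "'n \<Rightarrow> nat"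
  assumes ord: "inj ord" and upper: "\<And>i j. ord j < ord i \<Longrightarrow> B $ i $ j = 0"
    and stable: "\<And>i. Re (B $ i $ i) < 0"
  obtains \<epsilon> c :: real where "0 < \<epsilon>" "0 < c"
    "\<And>z. inner z ((\<chi> i j. of_real (\<epsilon> ^ ord j / \<epsilon> ^ ord i) * B $ i $ j) *v z) \<le> - c * (norm z)\<^sup>2"
proof -
  let ?n = "real CARD('n)"
  define \<rho> where "\<rho> = Min (range (\<lambda>i. - Re (B $ i $ i)))"
  have "\<rho> \<in> range (\<lambda>i. - Re (B $ i $ i))"
    unfolding \<rho>_def by (intro Min_in) auto
  then have \<rho>: "0 < \<rho>"
    using stable by auto
  have "\<rho> \<le> - Re (B $ i $ i)" for i
    unfolding \<rho>_def by (rule Min_le) auto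
  then have diag: "Re (B $ i $ i) \<le> - \<rho>" for i
    by (simp add: le_minus_iff)
  define K where "K = Max (range (\<lambda>(i, j). cmod (B $ i $ j)))"
  have K: "cmod (B $ i $ j) \<le> K" for i j
    unfolding K_def by (rule Max_ge) (auto intro: image_eqI[of _ _ "(i, j)"])
  then have K_nonneg: "0 \<le> K"
    by (meson norm_ge_zero order_trans)
  define \<epsilon> where "\<epsilon> = min 1 (\<rho> / (2 * (K * ?n + 1)))"
  have \<epsilon>: "0 < \<epsilon>" "\<epsilon> \<le> 1"
    unfolding \<epsilon>_def using \<rho> K_nonneg by (auto intro!: divide_pos_pos add_nonneg_pos)
  have small: "K * ?n * \<epsilon> \<le> \<rho> / 2"
  proof -
    have bound: "x * (\<rho> / (2 * (x + 1))) \<le> \<rho> / 2" if "0 \<le> x" for x :: real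
      using that \<rho> by (simp add: field_simps)
    have "K * ?n * \<epsilon> \<le> K * ?n * (\<rho> / (2 * (K * ?n + 1)))"
      unfolding \<epsilon>_def using K_nonneg by (intro mult_left_mono) auto
    also have "\<dots> \<le> \<rho> / 2"
      using K_nonneg by (intro bound) simp
    finally show ?thesis .
  qed
  have "inner z ((\<chi> i j. of_real (\<epsilon> ^ ord j / \<epsilon> ^ ord i) * B $ i $ j) *v z) \<le> - (\<rho> / 2) * (norm z)\<^sup>2"
    for z
  proof -
    have "inner z ((\<chi> i j. of_real (\<epsilon> ^ ord j / \<epsilon> ^ ord i) * B $ i $ j) *v z)
        \<le> (K * \<epsilon> * ?n - \<rho>) * (norm z)\<^sup>2"
      by (rule inner_scaled_triangular_le[OF ord upper diag K \<epsilon>])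
    also have "\<dots> \<le> - (\<rho> / 2) * (norm z)\<^sup>2"
      using mult_right_mono[OF small, of "(norm z)\<^sup>2"] by (simp add: algebra_simps)
    finally show ?thesis .
  qed
  with \<epsilon> \<rho> show ?thesis
    using that[of \<epsilon> "\<rho> / 2"] by simp
qed

definition diag_matrix :: "('n \<Rightarrow> 'a::semiring_1) \<Rightarrow> 'a^'n^'n" where
  "diag_matrix d = (\<chi> i j. if i = j then d i else 0)"

lemma diag_matrix_mult_left: "(diag_matrix d ** X) $ i $ j = d i * X $ i $ j"
  by (simp add: diag_matrix_def matrix_matrix_mult_def if_distrib[of "\<lambda>x. x * _"] cong: if_cong)

lemma diag_matrix_mult_right: "(X ** diag_matrix d) $ i $ j = X $ i $ j * d j"
  by (simp add: diag_matrix_def matrix_matrix_mult_def if_distrib[of "\<lambda>x. _ * x"] cong: if_cong)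

lemma invertible_diag_matrix:
  fixes d :: "'n::finite \<Rightarrow> 'a::field"
  assumes "\<And>i. d i \<noteq> 0"
  shows "invertible (diag_matrix d)"
  unfolding invertible_def
proof (intro exI conjI)
  show "diag_matrix d ** diag_matrix (\<lambda>i. inverse (d i)) = mat 1"
    "diag_matrix (\<lambda>i. inverse (d i)) ** diag_matrix d = mat 1"
    using assms by (simp_all add: Finite_Cartesian_Product.vec_eq_iff diag_matrix_mult_left
        Finite_Cartesian_Product.mat_def) (simp_all add: diag_matrix_def)
qed

definition cvec :: "real^'n \<Rightarrow> complex^'n" where
  "cvec v = (\<chi> i. complex_of_real (v $ i))"

lemma linear_cvec: "linear cvec"
  by (rule linearI) (simp_all add: cvec_def Finite_Cartesian_Product.vec_eq_iff complex_eq_iff)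

lemma inj_cvec: "inj cvec"
  by (rule injI) (simp add: cvec_def Finite_Cartesian_Product.vec_eq_iff)

lemma cmat_mult_cvec: "cmat A *v cvec v = cvec (A *v v)"
  by (simp add: cmat_def cvec_def matrix_vector_mult_def Finite_Cartesian_Product.vec_eq_iff)

lemma stable_matrix_Lyapunov_embedding:
  fixes A :: "real^'n^'n"
  assumes stable: "\<forall>l\<in>mspectrum A. Re l < 0"
  obtains L :: "real^'n \<Rightarrow> complex^'n" and c :: real
  where "linear L" "inj L" "0 < c" "\<And>v. inner (L v) (L (A *v v)) \<le> - c * (norm (L v))\<^sup>2"
proof -
  obtain ord :: "'n \<Rightarrow> nat" and Q B :: "complex^'n^'n"
    where ord: "inj ord" and Q: "invertible Q" and QA: "Q ** cmat A = B ** Q"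
      and upper: "\<And>i j. ord j < ord i \<Longrightarrow> B $ i $ j = 0"
      and eigen: "\<And>i. \<exists>v. v \<noteq> 0 \<and> cmat A *v v = B $ i $ i *s v"
    using complex_matrix_triangularization[of "cmat A"] by metis
  have "Re (B $ i $ i) < 0" for i
    using eigen[of i] stable unfolding mspectrum_def by blast
  then obtain \<epsilon> c :: real where \<epsilon>: "0 < \<epsilon>" and c: "0 < c"
    and dissipative: "\<And>z. inner z ((\<chi> i j. of_real (\<epsilon> ^ ord j / \<epsilon> ^ ord i) * B $ i $ j) *v z)
      \<le> - c * (norm z)\<^sup>2"
    using scaled_triangular_dissipative[OF ord upper] by blast
  define S :: "complex^'n^'n" where "S = (\<chi> i j. of_real (\<epsilon> ^ ord j / \<epsilon> ^ ord i) * B $ i $ j)"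
  define D :: "complex^'n^'n" where "D = diag_matrix (\<lambda>i. of_real (1 / \<epsilon> ^ ord i))"
  have D: "invertible D"
    unfolding D_def using \<epsilon> by (intro invertible_diag_matrix) simp
  have DB: "D ** B = S ** D"
    using \<epsilon> by (simp add: D_def S_def Finite_Cartesian_Product.vec_eq_iff diag_matrix_mult_left
        diag_matrix_mult_right)
  define L where "L v = (D ** Q) *v cvec v" for v
  show ?thesis
  proof
    show "linear L"
      unfolding L_def using linear_compose[OF linear_cvec matrix_vector_mul_linear]
      by (simp add: o_def)
    show "inj L"
      unfolding L_def using inj_compose[OF inj_matrix_vector_mult[OF invertible_mult[OF D Q]] inj_cvec]
      by (simp add: o_def)
    show "0 < c"
      by (rule c)
    show "inner (L v) (L (A *v v)) \<le> - c * (norm (L v))\<^sup>2" for v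
    proof -
      have "L (A *v v) = (D ** (Q ** cmat A)) *v cvec v"
        by (simp add: L_def matrix_vector_mul_assoc matrix_mul_assoc flip: cmat_mult_cvec)
      also have "\<dots> = ((D ** B) ** Q) *v cvec v"
        by (simp add: QA matrix_mul_assoc)
      also have "\<dots> = S *v L v"
        by (simp add: L_def DB matrix_vector_mul_assoc matrix_mul_assoc)
      finally show ?thesis
        using dissipative[of "L v"] by (simp add: S_def)
    qed
  qed
qed

section \<open>The squared norm of an integral solution\<close>

lemma exp_bound_chain:
  fixes \<phi> G :: "real \<Rightarrow> real"
  assumes "0 \<le> t" "0 < \<Delta>"
    and step: "\<And>s0 s. 0 \<le> s0 \<Longrightarrow> s0 \<le> s \<Longrightarrow> s \<le> t \<Longrightarrow> s - s0 \<le> \<Delta> \<Longrightarrow>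
      \<phi> s \<le> \<phi> s0 * exp (G s - G s0)"
  shows "\<phi> t \<le> \<phi> 0 * exp (G t - G 0)"
proof -
  have bound: "\<phi> s \<le> \<phi> 0 * exp (G s - G 0)" if "0 \<le> s" "s \<le> t" "s \<le> real n * \<Delta>" for n s
    using that
  proof (induction n arbitrary: s)
    case 0
    then show ?case by simp
  next
    case (Suc n)
    show ?case
    proof (cases "s \<le> real n * \<Delta>")
      case True
      then show ?thesis
        using Suc.prems by (intro Suc.IH) auto
    next
      case False
      define s0 where "s0 = real n * \<Delta>"
      have s0: "0 \<le> s0" "s0 \<le> s" "s - s0 \<le> \<Delta>"
        using False Suc.prems \<open>0 < \<Delta>\<close> by (auto simp: s0_def algebra_simps)
      have "\<phi> s \<le> \<phi> s0 * exp (G s - G s0)"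
        using s0 Suc.prems by (intro step) auto
      also have "\<dots> \<le> \<phi> 0 * exp (G s0 - G 0) * exp (G s - G s0)"
        using s0 Suc.prems by (intro mult_right_mono Suc.IH) (auto simp: s0_def)
      also have "\<dots> = \<phi> 0 * exp (G s - G 0)"
        by (simp add: mult.assoc flip: exp_add)
      finally show ?thesis .
    qed
  qed
  obtain n :: nat where "t / \<Delta> \<le> n"
    by (meson real_arch_simple)
  then have "t \<le> real n * \<Delta>"
    using \<open>0 < \<Delta>\<close> by (simp add: divide_le_eq)
  with \<open>0 \<le> t\<close> show ?thesis
    by (intro bound) auto
qed

locale norm_sq_growth =
  fixes y h :: "real \<Rightarrow> 'a::{real_inner, banach}" and f k :: "real \<Rightarrow> real"
  assumes has_integral_h: "\<And>t. 0 \<le> t \<Longrightarrow> (h has_integral (y t - y 0)) {0..t}"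
    and integrable_f: "\<And>t. f integrable_on {0..t}"
    and integrable_k: "\<And>t. k integrable_on {0..t}"
    and norm_h_le: "\<And>r. 0 \<le> r \<Longrightarrow> norm (h r) \<le> k r * norm (y r)"
    and inner_h_le: "\<And>r. 0 \<le> r \<Longrightarrow> inner (y r) (h r) \<le> f r * (norm (y r))\<^sup>2"
    and abs_f_le: "\<And>r. 0 \<le> r \<Longrightarrow> \<bar>f r\<bar> \<le> k r"
begin

lemma k_nonneg: "0 \<le> r \<Longrightarrow> 0 \<le> k r"
  using abs_f_le[of r] by linarith

lemma integrable_f_interval: "0 \<le> s \<Longrightarrow> f integrable_on {s..r}"
  by (rule integrable_subinterval_real[OF integrable_f[of r]]) auto

lemma integrable_k_interval: "0 \<le> s \<Longrightarrow> k integrable_on {s..r}"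
  by (rule integrable_subinterval_real[OF integrable_k[of r]]) auto

lemma integral_k_nonneg: "0 \<le> s \<Longrightarrow> 0 \<le> integral {s..r} k"
  using k_nonneg by (intro integral_nonneg integrable_k_interval) auto

lemma has_integral_h_interval:
  assumes "0 \<le> s" "s \<le> r"
  shows "(h has_integral (y r - y s)) {s..r}"
proof -
  have hr: "(h has_integral (y r - y 0)) {0..r}"
    using assms by (intro has_integral_h) simp
  then have "h integrable_on {s..r}"
    by (rule integrable_subinterval_real[OF has_integral_integrable]) (use assms in auto)
  then have I: "(h has_integral integral {s..r} h) {s..r}"
    by (rule integrable_integral)
  have "(h has_integral (y s - y 0 + integral {s..r} h)) {0..r}"
    by (rule has_integral_combine[OF assms has_integral_h[OF assms(1)] I])
  then have "y r - y 0 = y s - y 0 + integral {s..r} h"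
    by (rule has_integral_unique[OF hr])
  with I show ?thesis
    by (simp add: algebra_simps)
qed

lemma continuous_on_y: "continuous_on {0..t} y"
proof (cases "0 \<le> t")
  case True
  have "h integrable_on {0..t}"
    using has_integral_h[OF True] by blast
  then have "continuous_on {0..t} (\<lambda>r. y 0 + integral {0..r} h)"
    by (intro continuous_intros indefinite_integral_continuous_1)
  moreover have "y 0 + integral {0..r} h = y r" if "r \<in> {0..t}" for r
    using has_integral_h[of r] that by (simp add: integral_unique)
  ultimately show ?thesis
    by (rule continuous_on_eq)
qed simp

lemma norm_increment_le:
  assumes s: "0 \<le> s0" "s0 \<le> r" "r \<le> s" and bound: "\<And>q. q \<in> {s0..s} \<Longrightarrow> norm (y q) \<le> X"
  shows "norm (y r - y s0) \<le> integral {s0..s} k * X"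
proof -
  have "norm (y s0) \<le> X"
    using bound s by simp
  then have X: "0 \<le> X"
    by (rule order_trans[OF norm_ge_zero])
  have h: "(h has_integral (y r - y s0)) {s0..r}"
    using has_integral_h_interval s by auto
  then have "norm (y r - y s0) = norm (integral {s0..r} h)"
    by (simp add: integral_unique)
  also have "\<dots> \<le> integral {s0..r} (\<lambda>q. k q * X)"
  proof (rule integral_norm_bound_integral)
    show "h integrable_on {s0..r}" "(\<lambda>q. k q * X) integrable_on {s0..r}"
      using h s by (auto intro: integrable_on_mult_left integrable_k_interval)
    show "norm (h q) \<le> k q * X" if "q \<in> {s0..r}" for q
      using that s norm_h_le[of q] bound[of q] k_nonneg[of q] by (meson atLeastAtMost_iff
          mult_left_mono order_trans)
  qed
  also have "\<dots> = integral {s0..r} k * X"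
    by simp
  also have "\<dots> \<le> integral {s0..s} k * X"
  proof (rule mult_right_mono[OF integral_subset_le X])
    show "{s0..r} \<subseteq> {s0..s}" "k integrable_on {s0..r}" "k integrable_on {s0..s}"
      using s by (auto intro: integrable_k_interval)
    show "\<forall>q\<in>{s0..s}. 0 \<le> k q"
      using s(1) k_nonneg by auto
  qed
  finally show ?thesis .
qed

lemma local_bound:
  assumes s: "0 \<le> s0" "s0 \<le> s" and small: "integral {s0..s} k \<le> 1/2" and r: "r \<in> {s0..s}"
  shows "norm (y r) \<le> 2 * norm (y s0)"
    and "norm (y r - y s0) \<le> 2 * integral {s0..s} k * norm (y s0)"
proof -
  let ?\<theta> = "integral {s0..s} k"
  have "continuous_on {s0..s} (\<lambda>r. norm (y r))"
    using continuous_on_subset[OF continuous_on_y[of s]] s by (intro continuous_on_norm) auto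
  then have "\<exists>rmax\<in>{s0..s}. \<forall>r\<in>{s0..s}. norm (y r) \<le> norm (y rmax)"
    using s by (intro continuous_attains_sup) auto
  then obtain rmax where rmax: "rmax \<in> {s0..s}" and max: "\<And>r. r \<in> {s0..s} \<Longrightarrow> norm (y r) \<le> norm (y rmax)"
    by blast
  define X where "X = norm (y rmax)"
  have increment: "norm (y r - y s0) \<le> ?\<theta> * X" if "r \<in> {s0..s}" for r
    using that s max unfolding X_def by (intro norm_increment_le) auto
  have "X \<le> norm (y s0) + ?\<theta> * X"
    using norm_triangle_sub[of "y rmax" "y s0"] increment[OF rmax] unfolding X_def by linarith
  moreover have "?\<theta> * X \<le> 1/2 * X"
    using small by (rule mult_right_mono) (simp add: X_def)
  ultimately have X_le: "X \<le> 2 * norm (y s0)"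
    by linarith
  show "norm (y r) \<le> 2 * norm (y s0)"
    using max[OF r] X_le unfolding X_def by linarith
  show "norm (y r - y s0) \<le> 2 * ?\<theta> * norm (y s0)"
    using increment[OF r] mult_left_mono[OF X_le integral_k_nonneg[OF s(1), of s]] by (simp add: mult_ac)
qed

lemma inner_h_le_near:
  assumes s: "0 \<le> s0" "s0 \<le> s" and small: "integral {s0..s} k \<le> 1/2" and q: "q \<in> {s0..s}"
  shows "inner (y s0) (h q) \<le> (norm (y s0))\<^sup>2 * (f q + 10 * integral {s0..s} k * k q)"
proof -
  define \<theta> where "\<theta> = integral {s0..s} k"
  define n0 where "n0 = norm (y s0)"
  have \<theta>: "0 \<le> \<theta>"
    unfolding \<theta>_def using s(1) by (rule integral_k_nonneg)
  have n0: "0 \<le> n0"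
    by (simp add: n0_def)
  have q0: "0 \<le> q"
    using q s by auto
  have near: "norm (y q) \<le> 2 * n0" "norm (y q - y s0) \<le> 2 * \<theta> * n0"
    using local_bound[OF s small q] unfolding \<theta>_def n0_def by auto
  have "(norm (y q))\<^sup>2 - n0\<^sup>2 = (norm (y q) + n0) * (norm (y q) - n0)"
    by (simp add: power2_eq_square square_diff_square_factored)
  then have "\<bar>(norm (y q))\<^sup>2 - n0\<^sup>2\<bar> = (norm (y q) + n0) * \<bar>norm (y q) - n0\<bar>"
    using n0 by (simp add: abs_mult)
  also have "\<dots> \<le> (3 * n0) * (2 * \<theta> * n0)"
    using near norm_triangle_ineq3[of "y q" "y s0"] n0 \<theta> by (intro mult_mono) (auto simp: n0_def)
  finally have square_change: "\<bar>(norm (y q))\<^sup>2 - n0\<^sup>2\<bar> \<le> 6 * \<theta> * n0\<^sup>2"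
    by (simp add: power2_eq_square mult_ac)
  have "f q * ((norm (y q))\<^sup>2 - n0\<^sup>2) \<le> \<bar>f q\<bar> * \<bar>(norm (y q))\<^sup>2 - n0\<^sup>2\<bar>"
    using abs_ge_self[of "f q * ((norm (y q))\<^sup>2 - n0\<^sup>2)"] by (simp add: abs_mult)
  also have "\<dots> \<le> k q * (6 * \<theta> * n0\<^sup>2)"
    by (rule mult_mono[OF abs_f_le[OF q0] square_change k_nonneg[OF q0] abs_ge_zero])
  finally have "inner (y q) (h q) \<le> n0\<^sup>2 * f q + 6 * \<theta> * n0\<^sup>2 * k q"
    using inner_h_le[OF q0] by (simp add: algebra_simps)
  moreover have "norm (h q) \<le> k q * (2 * n0)"
    using norm_h_le[OF q0] mult_left_mono[OF near(1) k_nonneg[OF q0]] by linarith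
  then have "norm (y q - y s0) * norm (h q) \<le> (2 * \<theta> * n0) * (k q * (2 * n0))"
    using \<theta> n0 by (intro mult_mono[OF near(2)]) auto
  then have "- inner (y q - y s0) (h q) \<le> 4 * \<theta> * n0\<^sup>2 * k q"
    using norm_cauchy_schwarz[of "y q - y s0" "- h q"] by (simp add: power2_eq_square algebra_simps)
  ultimately show ?thesis
    unfolding \<theta>_def n0_def by (simp add: inner_diff_left algebra_simps)
qed

lemma inner_increment_le:
  assumes s: "0 \<le> s0" "s0 \<le> s" and small: "integral {s0..s} k \<le> 1/2"
  shows "inner (y s0) (y s - y s0)
    \<le> (norm (y s0))\<^sup>2 * (integral {s0..s} f + 10 * (integral {s0..s} k)\<^sup>2)"
proof -
  let ?\<theta> = "integral {s0..s} k" and ?n0 = "norm (y s0)"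
  have "((\<lambda>q. inner (y s0) (h q)) has_integral inner (y s0) (y s - y s0)) {s0..s}"
    using has_integral_linear[OF has_integral_h_interval[OF s] bounded_linear_inner_right]
    by (simp add: o_def)
  moreover have "((\<lambda>q. ?n0\<^sup>2 * (f q + 10 * ?\<theta> * k q))
      has_integral (?n0\<^sup>2 * (integral {s0..s} f + 10 * ?\<theta> * ?\<theta>))) {s0..s}"
    using s by (intro has_integral_mult_right has_integral_add integrable_integral
        integrable_f_interval integrable_k_interval)
  ultimately have "inner (y s0) (y s - y s0) \<le> ?n0\<^sup>2 * (integral {s0..s} f + 10 * ?\<theta> * ?\<theta>)"
    using inner_h_le_near[OF s small] by (rule has_integral_le)
  then show ?thesis
    by (simp add: power2_eq_square mult_ac)
qed

lemma step_bound:
  assumes s: "0 \<le> s0" "s0 \<le> s" and small: "integral {s0..s} k \<le> 1/2"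
  shows "(norm (y s))\<^sup>2
    \<le> (norm (y s0))\<^sup>2 * exp (2 * integral {s0..s} f + 24 * (integral {s0..s} k)\<^sup>2)"
proof -
  let ?\<theta> = "integral {s0..s} k" and ?n0 = "norm (y s0)"
  have "(norm (y s - y s0))\<^sup>2 \<le> (2 * ?\<theta> * ?n0)\<^sup>2"
    using local_bound(2)[OF s small, of s] s by (intro power_mono) auto
  moreover have "(norm (y s))\<^sup>2 = ?n0\<^sup>2 + 2 * inner (y s0) (y s - y s0) + (norm (y s - y s0))\<^sup>2"
    unfolding power2_norm_eq_inner by (simp add: inner_diff_left inner_diff_right inner_commute)
  ultimately have "(norm (y s))\<^sup>2 \<le> ?n0\<^sup>2 * (1 + (2 * integral {s0..s} f + 24 * ?\<theta>\<^sup>2))"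
    using inner_increment_le[OF s small] by (simp add: power_mult_distrib algebra_simps)
  also have "\<dots> \<le> ?n0\<^sup>2 * exp (2 * integral {s0..s} f + 24 * ?\<theta>\<^sup>2)"
    by (intro mult_left_mono exp_ge_add_one_self) simp_all
  finally show ?thesis .
qed

lemma norm_sq_le_perturbed:
  assumes \<delta>: "0 < \<delta>" "\<delta> \<le> 1/2" and t: "0 \<le> t"
  shows "(norm (y t))\<^sup>2
    \<le> (norm (y 0))\<^sup>2 * exp (2 * integral {0..t} f + 24 * \<delta> * integral {0..t} k)"
proof -
  define K where "K r = integral {0..r} k" for r
  define G where "G r = 2 * integral {0..r} f + 24 * \<delta> * K r" for r
  have "uniformly_continuous_on {0..t} K"
    unfolding K_def by (intro compact_uniformly_continuous indefinite_integral_continuous_1 integrable_k) auto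
  then obtain \<Delta> where \<Delta>: "0 < \<Delta>"
    and close: "\<And>r r'. r \<in> {0..t} \<Longrightarrow> r' \<in> {0..t} \<Longrightarrow> dist r' r < \<Delta> \<Longrightarrow> dist (K r') (K r) < \<delta>"
    unfolding uniformly_continuous_on_def using \<delta>(1) by metis
  have "(norm (y t))\<^sup>2 \<le> (norm (y 0))\<^sup>2 * exp (G t - G 0)"
  proof (rule exp_bound_chain[OF t half_gt_zero[OF \<Delta>]])
    fix s0 s
    assume s: "0 \<le> s0" "s0 \<le> s" "s \<le> t" "s - s0 \<le> \<Delta> / 2"
    have \<theta>: "integral {s0..s} k = K s - K s0"
      using Henstock_Kurzweil_Integration.integral_combine[OF s(1,2) integrable_k[of s]] by (simp add: K_def)
    also have "\<dots> < \<delta>"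
      using close[of s0 s] s \<Delta> by (simp add: dist_real_def)
    finally have small: "integral {s0..s} k \<le> \<delta>"
      by simp
    have "24 * (integral {s0..s} k)\<^sup>2 \<le> 24 * \<delta> * integral {s0..s} k"
      using small integral_k_nonneg[OF s(1), of s]
      by (simp add: power2_eq_square mult_right_mono)
    moreover have "integral {s0..s} f = integral {0..s} f - integral {0..s0} f"
      using Henstock_Kurzweil_Integration.integral_combine[OF s(1,2) integrable_f[of s]] by simp
    ultimately have "2 * integral {s0..s} f + 24 * (integral {s0..s} k)\<^sup>2 \<le> G s - G s0"
      unfolding G_def \<theta> by (simp add: algebra_simps)
    then have "exp (2 * integral {s0..s} f + 24 * (integral {s0..s} k)\<^sup>2) \<le> exp (G s - G s0)"
      by simp
    then show "(norm (y s))\<^sup>2 \<le> (norm (y s0))\<^sup>2 * exp (G s - G s0)"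
      using step_bound[OF s(1,2)] small \<delta>(2)
      by (meson mult_left_mono order_trans zero_le_power2)
  qed
  then show ?thesis
    by (simp add: G_def K_def)
qed

theorem norm_sq_le:
  assumes "0 \<le> t"
  shows "(norm (y t))\<^sup>2 \<le> (norm (y 0))\<^sup>2 * exp (2 * integral {0..t} f)"
proof (rule tendsto_le[OF trivial_limit_at_right_real])
  show "((\<lambda>\<delta>. (norm (y 0))\<^sup>2 * exp (2 * integral {0..t} f + 24 * \<delta> * integral {0..t} k))
      \<longlongrightarrow> (norm (y 0))\<^sup>2 * exp (2 * integral {0..t} f)) (at_right 0)"
    by (auto intro!: tendsto_eq_intros)
  have "\<forall>\<^sub>F \<delta> in at_right 0. \<delta> \<in> {0<..<1/2::real}"
    by (rule eventually_at_right_real) simp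
  then show "\<forall>\<^sub>F \<delta> in at_right 0. (norm (y t))\<^sup>2
      \<le> (norm (y 0))\<^sup>2 * exp (2 * integral {0..t} f + 24 * \<delta> * integral {0..t} k)"
    by eventually_elim (use assms in \<open>auto intro: norm_sq_le_perturbed\<close>)
qed simp

end

section \<open>Square-integrable inputs\<close>

lemma L2_u0:
  fixes N :: "'m::finite \<Rightarrow> real^'n^'n" and u :: "real \<Rightarrow> real^'m"
  assumes "L2 u"
  shows "L2 (u0 N u)"
proof -
  define P :: "real^'m \<Rightarrow> real^'m" where "P v = (\<chi> k. if N k = 0 then 0 else v $ k)" for v
  have u0: "u0 N u = (\<lambda>s. P (u s))"
    unfolding u0_def P_def by simp
  have "linear P"
    by (rule linearI) (auto simp: P_def Finite_Cartesian_Product.vec_eq_iff)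
  then have "continuous_on UNIV P"
    by (simp add: linear_continuous_on linear_conv_bounded_linear)
  moreover have "u \<in> borel_measurable (lebesgue_on {0..})"
    using assms unfolding L2_def by simp
  ultimately have measurable: "u0 N u \<in> borel_measurable (lebesgue_on {0..})"
    unfolding u0 by (rule borel_measurable_continuous_on)
  have norm_P: "norm (P v) \<le> norm v" for v
    by (rule norm_le_componentwise_cart) (auto simp: P_def)
  have "integrable (lebesgue_on {0..}) (\<lambda>s. (norm (u0 N u s))\<^sup>2)"
  proof (rule Bochner_Integration.integrable_bound)
    show "integrable (lebesgue_on {0..}) (\<lambda>s. (norm (u s))\<^sup>2)"
      using assms unfolding L2_def by simp
    show "(\<lambda>s. (norm (u0 N u s))\<^sup>2) \<in> borel_measurable (lebesgue_on {0..})"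
      using measurable by measurable
    show "AE s in lebesgue_on {0..}. norm ((norm (u0 N u s))\<^sup>2) \<le> norm ((norm (u s))\<^sup>2)"
      unfolding u0 using norm_P by (auto intro!: power_mono)
  qed
  with measurable show ?thesis
    unfolding L2_def by simp
qed

lemma L2_absolutely_integrable_on_norm_sq:
  assumes "L2 w"
  shows "(\<lambda>r. (norm (w r))\<^sup>2) absolutely_integrable_on {0..}"
  using assms unfolding L2_def
  by (intro nonnegative_absolutely_integrable_1 integrable_on_lebesgue_on) auto

lemma L2_integrable_on_norm_sq:
  assumes "L2 w"
  shows "(\<lambda>r. (norm (w r))\<^sup>2) integrable_on {0..t}"
  using absolutely_integrable_on_subinterval[OF L2_absolutely_integrable_on_norm_sq[OF assms]]
  by (auto simp: absolutely_integrable_on_def)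

lemma integral_norm_sq_le_L2norm_sq:
  assumes "L2 w"
  shows "integral {0..t} (\<lambda>r. (norm (w r))\<^sup>2) \<le> L2norm_sq w"
proof -
  have "integral {0..t} (\<lambda>r. (norm (w r))\<^sup>2) \<le> integral {0..} (\<lambda>r. (norm (w r))\<^sup>2)"
    using L2_integrable_on_norm_sq[OF assms] L2_absolutely_integrable_on_norm_sq[OF assms]
    by (intro integral_subset_le) (auto simp: absolutely_integrable_on_def)
  also have "\<dots> = L2norm_sq w"
    using assms unfolding L2_def L2norm_sq_def by (simp add: lebesgue_integral_eq_integral)
  finally show ?thesis .
qed

lemma L2_integrable_on_norm:
  assumes "L2 w"
  shows "(\<lambda>r. norm (w r)) integrable_on {0..t}"
proof (rule measurable_bounded_by_integrable_imp_integrable_real)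
  have "w \<in> borel_measurable (lebesgue_on {0..})"
    using assms unfolding L2_def by simp
  then have "w \<in> borel_measurable (lebesgue_on {0..t})"
    by (rule measurable_restrict_mono) auto
  then show "(\<lambda>r. norm (w r)) \<in> borel_measurable (lebesgue_on {0..t})"
    by measurable
  show "(\<lambda>r. 1 + (norm (w r))\<^sup>2) integrable_on {0..t}"
    using L2_integrable_on_norm_sq[OF assms] by (intro integrable_add) auto
  show "\<bar>norm (w r)\<bar> \<le> 1 + (norm (w r))\<^sup>2" for r
  proof -
    have "0 \<le> (norm (w r) - 1)\<^sup>2"
      by simp
    then have "2 * norm (w r) \<le> (norm (w r))\<^sup>2 + 1"
      by (simp add: power2_diff)
    with norm_ge_zero[of "w r"] show ?thesis
      by linarith
  qed
qed simp

lemma integral_norm_le_L2norm_sq: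
  assumes w: "L2 w" and c: "0 < c" and t: "0 \<le> t"
  shows "2 * \<beta> * integral {0..t} (\<lambda>r. norm (w r)) \<le> c * t + \<beta>\<^sup>2 / c * L2norm_sq w"
proof -
  have pointwise: "2 * \<beta> * norm (w r) \<le> c + \<beta>\<^sup>2 / c * (norm (w r))\<^sup>2" for r
  proof -
    have "0 \<le> (c - \<beta> * norm (w r))\<^sup>2 / c"
      using c by simp
    then show ?thesis
      using c by (simp add: power2_diff field_simps power_mult_distrib) (simp add: power2_eq_square)
  qed
  have "2 * \<beta> * integral {0..t} (\<lambda>r. norm (w r)) = integral {0..t} (\<lambda>r. 2 * \<beta> * norm (w r))"
    by simp
  also have "\<dots> \<le> integral {0..t} (\<lambda>r. c + \<beta>\<^sup>2 / c * (norm (w r))\<^sup>2)"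
    by (rule integral_le[OF integrable_on_mult_right[OF L2_integrable_on_norm[OF w]]
        integrable_add[OF integrable_const_ivl integrable_on_mult_right[OF L2_integrable_on_norm_sq[OF w]]]
        pointwise])
  also have "\<dots> = integral {0..t} (\<lambda>r. c) + integral {0..t} (\<lambda>r. \<beta>\<^sup>2 / c * (norm (w r))\<^sup>2)"
    by (rule integral_add[OF integrable_const_ivl integrable_on_mult_right[OF L2_integrable_on_norm_sq[OF w]]])
  also have "\<dots> = c * t + \<beta>\<^sup>2 / c * integral {0..t} (\<lambda>r. (norm (w r))\<^sup>2)"
    using t by simp
  also have "\<dots> \<le> c * t + \<beta>\<^sup>2 / c * L2norm_sq w"
    using integral_norm_sq_le_L2norm_sq[OF w] c by (intro add_left_mono mult_left_mono) auto
  finally show ?thesis .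
qed

section \<open>Decay of the bilinear system\<close>

definition bilinear_term :: "('m::finite \<Rightarrow> real^'n^'n) \<Rightarrow> real^'m \<Rightarrow> real^'n \<Rightarrow> real^'n" where
  "bilinear_term N w v = (\<Sum>k\<in>UNIV. (w $ k) *\<^sub>R (N k *v v))"

lemma bilinear_term_u0: "bilinear_term N (u0 N u s) v = bilinear_term N (u s) v"
  unfolding bilinear_term_def by (intro sum.cong) (auto simp: u0_def)

lemma norm_bilinear_term_le:
  fixes N :: "'m::finite \<Rightarrow> real^'n^'n"
  obtains b :: real where "0 < b" "\<And>w v. norm (bilinear_term N w v) \<le> b * norm w * norm v"
proof -
  have "\<exists>B>0. \<forall>v. norm (N k *v v) \<le> norm v * B" for k
    using bounded_linear.pos_bounded[OF matrix_vector_mul_bounded_linear] by blast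
  then obtain B where B: "\<And>k. 0 < B k" "\<And>k v. norm (N k *v v) \<le> norm v * B k"
    by metis
  show ?thesis
  proof
    show "0 < sum B UNIV"
      using B(1) by (simp add: sum_pos)
    fix w v
    have "norm (bilinear_term N w v) \<le> (\<Sum>k\<in>UNIV. \<bar>w $ k\<bar> * norm (N k *v v))"
      unfolding bilinear_term_def by (rule order_trans[OF norm_sum]) simp
    also have "\<dots> \<le> (\<Sum>k\<in>UNIV. norm w * (norm v * B k))"
      by (intro sum_mono mult_mono component_le_norm_cart B(2)) auto
    also have "\<dots> = sum B UNIV * norm w * norm v"
      by (simp add: sum_distrib_left sum_distrib_right mult_ac)
    finally show "norm (bilinear_term N w v) \<le> sum B UNIV * norm w * norm v" .
  qed
qed

locale bilinear_Lyapunov =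
  fixes A :: "real^'n^'n" and N :: "'m::finite \<Rightarrow> real^'n^'n"
    and L :: "real^'n \<Rightarrow> 'b::{real_inner, banach}" and c m M a b :: real
  assumes linear_L: "linear L"
    and lower: "0 < m" "\<And>v. m * norm v \<le> norm (L v)"
    and upper: "0 < M" "\<And>v. norm (L v) \<le> M * norm v"
    and norm_A: "0 < a" "\<And>v. norm (A *v v) \<le> a * norm v"
    and norm_N: "0 < b" "\<And>w v. norm (bilinear_term N w v) \<le> b * norm w * norm v"
    and dissipative: "0 < c" "\<And>v. inner (L v) (L (A *v v)) \<le> - c * (norm (L v))\<^sup>2"
begin

definition \<beta> :: real where
  "\<beta> = M * b / m"

lemma \<beta>_pos: "0 < \<beta>"
  using lower upper norm_N by (simp add: \<beta>_def)

lemma norm_L_le: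
  assumes w: "norm w \<le> e * norm v" and "0 \<le> e"
  shows "norm (L w) \<le> M * e / m * norm (L v)"
proof -
  have v: "norm v \<le> norm (L v) / m"
    using lower by (simp add: pos_le_divide_eq mult.commute)
  have "norm (L w) \<le> M * norm w"
    by (rule upper(2))
  also have "\<dots> \<le> M * (e * norm v)"
    using w upper(1) by (intro mult_left_mono) auto
  also have "\<dots> \<le> M * (e * (norm (L v) / m))"
    using v upper(1) \<open>0 \<le> e\<close> by (intro mult_left_mono) auto
  finally show ?thesis
    by simp
qed

lemma norm_L_perturbed_le:
  assumes "norm p \<le> b * \<omega> * norm v" "0 \<le> \<omega>"
  shows "norm (L (A *v v + p)) \<le> (M * a / m + \<beta> * \<omega>) * norm (L v)"
proof -
  have "norm (A *v v + p) \<le> (a + b * \<omega>) * norm v"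
    using norm_triangle_ineq[of "A *v v" p] norm_A(2)[of v] assms(1) by (simp add: algebra_simps)
  then have "norm (L (A *v v + p)) \<le> M * (a + b * \<omega>) / m * norm (L v)"
    using norm_A(1) norm_N(1) assms(2) by (intro norm_L_le) simp_all
  moreover have "M * (a + b * \<omega>) / m = M * a / m + \<beta> * \<omega>"
    unfolding \<beta>_def by (simp add: distrib_left add_divide_distrib)
  ultimately show ?thesis
    by simp
qed

lemma inner_L_perturbed_le:
  assumes "norm p \<le> b * \<omega> * norm v" "0 \<le> \<omega>"
  shows "inner (L v) (L (A *v v + p)) \<le> (- c + \<beta> * \<omega>) * (norm (L v))\<^sup>2"
proof -
  have "inner (L v) (L p) \<le> norm (L v) * norm (L p)"
    by (rule norm_cauchy_schwarz)
  also have "\<dots> \<le> norm (L v) * (M * (b * \<omega>) / m * norm (L v))"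
    using assms norm_N(1) by (intro mult_left_mono norm_L_le) (simp_all add: mult.assoc)
  finally have "inner (L v) (L p) \<le> \<beta> * \<omega> * (norm (L v))\<^sup>2"
    by (simp add: \<beta>_def power2_eq_square mult_ac)
  with dissipative(2)[of v] show ?thesis
    by (simp add: linear_add[OF linear_L] inner_add_right algebra_simps)
qed

lemma solution_norm_sq_growth:
  assumes u: "L2 u" and sol: "bilin_solution A N u x0 x"
  shows "norm_sq_growth (\<lambda>r. L (x r)) (\<lambda>r. L (A *v x r + bilinear_term N (u0 N u r) (x r)))
    (\<lambda>r. - c + \<beta> * norm (u0 N u r)) (\<lambda>r. c + M * a / m + \<beta> * norm (u0 N u r))"
proof
  have \<omega>: "(\<lambda>r. norm (u0 N u r)) integrable_on {0..t}" for t
    by (rule L2_integrable_on_norm[OF L2_u0[OF u]])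
  show "(\<lambda>r. - c + \<beta> * norm (u0 N u r)) integrable_on {0..t}"
    "(\<lambda>r. c + M * a / m + \<beta> * norm (u0 N u r)) integrable_on {0..t}" for t
    by (rule integrable_add[OF integrable_const_ivl integrable_on_mult_right[OF \<omega>]])+
  show "((\<lambda>r. L (A *v x r + bilinear_term N (u0 N u r) (x r))) has_integral (L (x t) - L (x 0))) {0..t}"
    if "0 \<le> t" for t
  proof -
    have "((\<lambda>r. A *v x r + bilinear_term N (u r) (x r)) has_integral (x t - x 0)) {0..t}"
      using sol that by (simp add: bilin_solution_def bilinear_term_def)
    then have "((\<lambda>r. A *v x r + bilinear_term N (u0 N u r) (x r)) has_integral (x t - x 0)) {0..t}"
      by (simp only: bilinear_term_u0)
    from has_integral_linear[OF this linear_conv_bounded_linear[THEN iffD1, OF linear_L]] show ?thesis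
      by (simp add: o_def linear_diff[OF linear_L])
  qed
  show "norm (L (A *v x r + bilinear_term N (u0 N u r) (x r)))
      \<le> (c + M * a / m + \<beta> * norm (u0 N u r)) * norm (L (x r))" for r
  proof -
    have "norm (L (A *v x r + bilinear_term N (u0 N u r) (x r)))
        \<le> (M * a / m + \<beta> * norm (u0 N u r)) * norm (L (x r))"
      by (rule norm_L_perturbed_le[OF norm_N(2) norm_ge_zero])
    also have "\<dots> \<le> (c + M * a / m + \<beta> * norm (u0 N u r)) * norm (L (x r))"
      using dissipative(1) by (intro mult_right_mono) auto
    finally show ?thesis .
  qed
  show "inner (L (x r)) (L (A *v x r + bilinear_term N (u0 N u r) (x r)))
      \<le> (- c + \<beta> * norm (u0 N u r)) * (norm (L (x r)))\<^sup>2" for r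
    by (rule inner_L_perturbed_le[OF norm_N(2) norm_ge_zero])
  show "\<bar>- c + \<beta> * norm (u0 N u r)\<bar> \<le> c + M * a / m + \<beta> * norm (u0 N u r)" for r
  proof -
    have "0 \<le> M * a / m" "0 \<le> \<beta> * norm (u0 N u r)"
      using lower(1) upper(1) norm_A(1) \<beta>_pos by simp_all
    then show ?thesis
      using dissipative(1) unfolding abs_le_iff by (intro conjI; linarith)
  qed
qed

lemma solution_Lyapunov_decay:
  assumes u: "L2 u" and sol: "bilin_solution A N u x0 x" and t: "0 \<le> t"
  shows "(norm (L (x t)))\<^sup>2 \<le> (norm (L x0))\<^sup>2 * exp (- c * t + \<beta>\<^sup>2 / c * L2norm_sq (u0 N u))"
proof -
  interpret norm_sq_growth "\<lambda>r. L (x r)" "\<lambda>r. L (A *v x r + bilinear_term N (u0 N u r) (x r))"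
    "\<lambda>r. - c + \<beta> * norm (u0 N u r)" "\<lambda>r. c + M * a / m + \<beta> * norm (u0 N u r)"
    by (rule solution_norm_sq_growth[OF u sol])
  have u0: "L2 (u0 N u)"
    by (rule L2_u0[OF u])
  have "integral {0..t} (\<lambda>r. - c + \<beta> * norm (u0 N u r))
      = integral {0..t} (\<lambda>r. - c) + integral {0..t} (\<lambda>r. \<beta> * norm (u0 N u r))"
    by (rule integral_add[OF integrable_const_ivl integrable_on_mult_right[OF L2_integrable_on_norm[OF u0]]])
  also have "\<dots> = - c * t + \<beta> * integral {0..t} (\<lambda>r. norm (u0 N u r))"
    using t by simp
  finally have "2 * integral {0..t} (\<lambda>r. - c + \<beta> * norm (u0 N u r))
      \<le> - c * t + \<beta>\<^sup>2 / c * L2norm_sq (u0 N u)"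
    using integral_norm_le_L2norm_sq[OF u0 dissipative(1) t, of \<beta>] by simp
  then have exp_le: "exp (2 * integral {0..t} (\<lambda>r. - c + \<beta> * norm (u0 N u r)))
      \<le> exp (- c * t + \<beta>\<^sup>2 / c * L2norm_sq (u0 N u))"
    by simp
  have "(norm (L (x t)))\<^sup>2
      \<le> (norm (L (x 0)))\<^sup>2 * exp (2 * integral {0..t} (\<lambda>r. - c + \<beta> * norm (u0 N u r)))"
    by (rule norm_sq_le[OF t])
  also have "\<dots> \<le> (norm (L x0))\<^sup>2 * exp (- c * t + \<beta>\<^sup>2 / c * L2norm_sq (u0 N u))"
    using sol mult_left_mono[OF exp_le zero_le_power2] by (simp add: bilin_solution_def)
  finally show ?thesis .
qed

theorem solution_norm_sq_decay:
  assumes u: "L2 u" and sol: "bilin_solution A N u x0 x" and t: "0 \<le> t"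
  shows "(norm (x t))\<^sup>2 \<le> exp ((\<beta> / sqrt c)\<^sup>2 * L2norm_sq (u0 N u)) * (norm x0)\<^sup>2 * (M / m)\<^sup>2 * exp (- c * t)"
proof -
  have "(m * norm (x t))\<^sup>2 \<le> (norm (L (x t)))\<^sup>2"
    using lower by (intro power_mono) auto
  also have "\<dots> \<le> (norm (L x0))\<^sup>2 * exp (- c * t + \<beta>\<^sup>2 / c * L2norm_sq (u0 N u))"
    by (rule solution_Lyapunov_decay[OF u sol t])
  also have "\<dots> \<le> (M * norm x0)\<^sup>2 * exp (- c * t + \<beta>\<^sup>2 / c * L2norm_sq (u0 N u))"
    using upper by (intro mult_right_mono power_mono) auto
  finally have "m\<^sup>2 * (norm (x t))\<^sup>2
      \<le> M\<^sup>2 * (norm x0)\<^sup>2 * (exp (- c * t) * exp (\<beta>\<^sup>2 / c * L2norm_sq (u0 N u)))"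
    by (simp add: power_mult_distrib flip: exp_add)
  then show ?thesis
    using lower(1) dissipative(1) by (simp add: field_simps power_divide)
qed

end

lemma bilinear_Lyapunov_exists:
  fixes A :: "real^'n^'n" and N :: "'m::finite \<Rightarrow> real^'n^'n"
    and L :: "real^'n \<Rightarrow> 'b::euclidean_space"
  assumes "linear L" "inj L" "0 < c" "\<And>v. inner (L v) (L (A *v v)) \<le> - c * (norm (L v))\<^sup>2"
  obtains m M a b where "bilinear_Lyapunov A N L c m M a b"
proof -
  obtain m where "0 < m" "\<And>v. m * norm v \<le> norm (L v)"
    using linear_inj_bounded_below_pos[OF assms(1,2)] by blast
  moreover obtain M where "0 < M" "\<And>v. norm (L v) \<le> M * norm v"
    using bounded_linear.pos_bounded[OF linear_conv_bounded_linear[THEN iffD1, OF assms(1)]]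
    by (auto simp: mult.commute)
  moreover obtain a where "0 < a" "\<And>v. norm (A *v v) \<le> a * norm v"
    using bounded_linear.pos_bounded[OF matrix_vector_mul_bounded_linear[of A]]
    by (auto simp: mult.commute)
  moreover obtain b where "0 < b" "\<And>w v. norm (bilinear_term N w v) \<le> b * norm w * norm v"
    using norm_bilinear_term_le[of N] by blast
  ultimately have "bilinear_Lyapunov A N L c m M a b"
    using assms unfolding bilinear_Lyapunov_def by blast
  then show ?thesis
    by (rule that)
qed

theorem theorem4p4:
  fixes A :: "real^'n^'n" and N :: "'m::finite \<Rightarrow> real^'n^'n"
  assumes "\<forall>l\<in>mspectrum A. Re l < 0"
  shows "\<exists>\<gamma> k1 k2. \<gamma> > 0 \<and> k1 > 0 \<and> k2 > 0 \<and>
    (\<forall>u x0 x. L2 u \<longrightarrow> bilin_solution A N u x0 x \<longrightarrow>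
      (\<forall>t\<ge>0. (norm (x t))\<^sup>2 \<le> exp (\<gamma>\<^sup>2 * L2norm_sq (u0 N u)) * (norm x0)\<^sup>2 * k1 * exp (- k2 * t)))"
proof -
  obtain L :: "real^'n \<Rightarrow> complex^'n" and c :: real
    where "linear L" "inj L" "0 < c" "\<And>v. inner (L v) (L (A *v v)) \<le> - c * (norm (L v))\<^sup>2"
    using stable_matrix_Lyapunov_embedding[OF assms] by blast
  then obtain m M a b where "bilinear_Lyapunov A N L c m M a b"
    using bilinear_Lyapunov_exists by blast
  then interpret bilinear_Lyapunov A N L c m M a b .
  have "0 < \<beta> / sqrt c" "0 < (M / m)\<^sup>2" "0 < c"
    using \<beta>_pos dissipative(1) lower(1) upper(1) by simp_all
  moreover have "\<forall>u x0 x. L2 u \<longrightarrow> bilin_solution A N u x0 x \<longrightarrow> (\<forall>t\<ge>0. (norm (x t))\<^sup>2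
      \<le> exp ((\<beta> / sqrt c)\<^sup>2 * L2norm_sq (u0 N u)) * (norm x0)\<^sup>2 * (M / m)\<^sup>2 * exp (- c * t))"
    using solution_norm_sq_decay by blast
  ultimately show ?thesis
    by blast
qed

end
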